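(* Let $\Omega\subsetneq\mathbb{C}$ be a domain and $z_0\in\partial\Omega$ such that there is $\delta>0$ with $D(z_0,r)\cap\Omega$ connected for every $0<r\le\delta$. Then $U_1(\Omega,z_0)$ is a dense $G_\delta$ subset of $H(\Omega)$.
   Context: $H(\Omega)$ is the space of holomorphic functions on $\Omega$ with the topology of uniform convergence on compact subsets. $D(z_0,r)$ is the open disk of center $z_0$, radius $r$. $U_1(\Omega,z_0)$ is the set of $f\in H(\Omega)$ for which there exist no $r>0$ and no holomorphic $F:D(z_0,r)\to\mathbb{C}$ with $F=f$ on $\Omega\cap D(z_0,r)$. *)

theory Defs
  imports "HOL-Analysis.Analysis"
begin

text \<open>H(Omega): holomorphic functions on Omega (values outside Omega are irrelevant).\<close>
definition Hol :: "complex set \<Rightarrow> (complex \<Rightarrow> complex) set" where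
  "Hol \<Omega> = {f. f holomorphic_on \<Omega>}"

definition hol_open :: "complex set \<Rightarrow> (complex \<Rightarrow> complex) set \<Rightarrow> bool" where
  "hol_open \<Omega> U \<longleftrightarrow> U \<subseteq> Hol \<Omega> \<and>
     (\<forall>f\<in>U. \<exists>K e. compact K \<and> K \<subseteq> \<Omega> \<and> e > 0 \<and>
        {g \<in> Hol \<Omega>. \<forall>z\<in>K. cmod (g z - f z) < e} \<subseteq> U)"

definition hol_topology :: "complex set \<Rightarrow> (complex \<Rightarrow> complex) topology" where
  "hol_topology \<Omega> = topology (hol_open \<Omega>)"

lemma istopology_hol_open: "istopology (hol_open \<Omega>)"
  unfolding istopology_def
proof (intro conjI allI impI)
  fix S T assume S: "hol_open \<Omega> S" and T: "hol_open \<Omega> T"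
  show "hol_open \<Omega> (S \<inter> T)"
    unfolding hol_open_def
  proof (intro conjI ballI)
    show "S \<inter> T \<subseteq> Hol \<Omega>" using S unfolding hol_open_def by blast
  next
    fix f assume f: "f \<in> S \<inter> T"
    obtain K1 e1 where 1: "compact K1" "K1 \<subseteq> \<Omega>" "e1 > 0"
      "{g \<in> Hol \<Omega>. \<forall>z\<in>K1. cmod (g z - f z) < e1} \<subseteq> S"
      using S f unfolding hol_open_def by blast
    obtain K2 e2 where 2: "compact K2" "K2 \<subseteq> \<Omega>" "e2 > 0"
      "{g \<in> Hol \<Omega>. \<forall>z\<in>K2. cmod (g z - f z) < e2} \<subseteq> T"
      using T f unfolding hol_open_def by blast
    have "{g \<in> Hol \<Omega>. \<forall>z\<in>K1 \<union> K2. cmod (g z - f z) < min e1 e2} \<subseteq> S \<inter> T"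
      using 1(4) 2(4) by fastforce
    then show "\<exists>K e. compact K \<and> K \<subseteq> \<Omega> \<and> e > 0 \<and>
        {g \<in> Hol \<Omega>. \<forall>z\<in>K. cmod (g z - f z) < e} \<subseteq> S \<inter> T"
      using 1 2 by (intro exI[of _ "K1 \<union> K2"] exI[of _ "min e1 e2"]) auto
  qed
next
  fix \<K> assume "\<forall>K\<in>\<K>. hol_open \<Omega> K"
  then show "hol_open \<Omega> (\<Union>\<K>)" unfolding hol_open_def by (meson Union_iff Union_least subset_iff)
qed

lemma openin_hol_topology: "openin (hol_topology \<Omega>) U \<longleftrightarrow> hol_open \<Omega> U"
  unfolding hol_topology_def using istopology_hol_open by (simp add: topology_inverse')

definition U1 :: "complex set \<Rightarrow> complex \<Rightarrow> (complex \<Rightarrow> complex) set" where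
  "U1 \<Omega> z0 = {f \<in> Hol \<Omega>. \<not> (\<exists>r>0. \<exists>F. F holomorphic_on ball z0 r \<and>
                                   (\<forall>z \<in> \<Omega> \<inter> ball z0 r. F z = f z))}"

end

theory Submission
  imports Defs "HOL-Complex_Analysis.Complex_Analysis"
begin

text \<open>
  A function f lies outside \<open>U1 \<Omega> z0\<close> iff for some n and m it extends holomorphically to
  \<open>D(z0, \<delta>/(n+1))\<close> with modulus at most m there. Each of these countably many sets is closed:
  by Montel's theorem a limit of such extensions is again one, and since \<open>D \<inter> \<Omega>\<close> is connected
  the identity theorem makes it agree with the limit f on all of \<open>D \<inter> \<Omega>\<close>. Hence \<open>U1 \<Omega> z0\<close> is
  a \<open>G\<^sub>\<delta>\<close>. Density needs no Baire argument: the extendable functions form a vector space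
  not containing \<open>1/(z - z0)\<close>, so for every f and all s \<noteq> t one of \<open>f + s/(z - z0)\<close>,
  \<open>f + t/(z - z0)\<close> lies in \<open>U1 \<Omega> z0\<close>, and both are close to f when s and t are small.
\<close>

lemma topspace_hol_topology: "topspace (hol_topology \<Omega>) = Hol \<Omega>"
proof
  show "topspace (hol_topology \<Omega>) \<subseteq> Hol \<Omega>"
    by (metis openin_hol_topology hol_open_def openin_topspace)
  have "hol_open \<Omega> (Hol \<Omega>)"
    unfolding hol_open_def by (intro conjI ballI subset_refl exI[of _ "{}"] exI[of _ 1]) auto
  then show "Hol \<Omega> \<subseteq> topspace (hol_topology \<Omega>)"
    by (metis openin_hol_topology openin_subset)
qed

lemma closedin_hol_topologyI:
  assumes "A \<subseteq> Hol \<Omega>"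
    and "\<And>f. f \<in> Hol \<Omega> \<Longrightarrow>
           (\<And>K e. compact K \<Longrightarrow> K \<subseteq> \<Omega> \<Longrightarrow> e > 0 \<Longrightarrow> \<exists>g\<in>A. \<forall>z\<in>K. cmod (g z - f z) < e) \<Longrightarrow>
           f \<in> A"
  shows "closedin (hol_topology \<Omega>) A"
  unfolding closedin_def topspace_hol_topology openin_hol_topology hol_open_def
proof (intro conjI ballI assms(1) Diff_subset)
  fix f assume f: "f \<in> Hol \<Omega> - A"
  show "\<exists>K e. compact K \<and> K \<subseteq> \<Omega> \<and> e > 0 \<and> {g \<in> Hol \<Omega>. \<forall>z\<in>K. cmod (g z - f z) < e} \<subseteq> Hol \<Omega> - A"
  proof (rule ccontr)
    assume "\<not> ?thesis"
    then have "\<exists>g\<in>A. \<forall>z\<in>K. cmod (g z - f z) < e" if "compact K" "K \<subseteq> \<Omega>" "e > 0" for K e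
      using that assms(1) by blast
    then show False
      using assms(2) f by blast
  qed
qed

lemma in_closure_of_hol_topologyI:
  assumes "A \<subseteq> Hol \<Omega>" "f \<in> Hol \<Omega>"
    and "\<And>K e. compact K \<Longrightarrow> K \<subseteq> \<Omega> \<Longrightarrow> e > 0 \<Longrightarrow> \<exists>g\<in>A. \<forall>z\<in>K. cmod (g z - f z) < e"
  shows "f \<in> hol_topology \<Omega> closure_of A"
  unfolding in_closure_of topspace_hol_topology
proof (intro conjI allI impI assms(2))
  fix T assume "f \<in> T \<and> openin (hol_topology \<Omega>) T"
  then obtain K e where "compact K" "K \<subseteq> \<Omega>" "e > 0"
    and T: "{g \<in> Hol \<Omega>. \<forall>z\<in>K. cmod (g z - f z) < e} \<subseteq> T"
    unfolding openin_hol_topology hol_open_def by blast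
  then obtain g where "g \<in> A" "\<forall>z\<in>K. cmod (g z - f z) < e"
    using assms(3) by blast
  then show "\<exists>g. g \<in> A \<and> g \<in> T"
    using assms(1) T by blast
qed

definition holomorphic_extendable_at :: "complex set \<Rightarrow> complex \<Rightarrow> (complex \<Rightarrow> complex) \<Rightarrow> bool" where
  "holomorphic_extendable_at \<Omega> z0 f \<longleftrightarrow>
     (\<exists>r>0. \<exists>F. F holomorphic_on ball z0 r \<and> (\<forall>z\<in>\<Omega> \<inter> ball z0 r. F z = f z))"

lemma U1_eq: "U1 \<Omega> z0 = {f \<in> Hol \<Omega>. \<not> holomorphic_extendable_at \<Omega> z0 f}"
  unfolding U1_def holomorphic_extendable_at_def by simp

lemma holomorphic_extendable_at_diff:
  assumes "holomorphic_extendable_at \<Omega> z0 f" "holomorphic_extendable_at \<Omega> z0 g"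
  shows "holomorphic_extendable_at \<Omega> z0 (\<lambda>z. f z - g z)"
proof -
  obtain r1 F1 where 1: "r1 > 0" "F1 holomorphic_on ball z0 r1" "\<forall>z\<in>\<Omega> \<inter> ball z0 r1. F1 z = f z"
    using assms(1) unfolding holomorphic_extendable_at_def by blast
  obtain r2 F2 where 2: "r2 > 0" "F2 holomorphic_on ball z0 r2" "\<forall>z\<in>\<Omega> \<inter> ball z0 r2. F2 z = g z"
    using assms(2) unfolding holomorphic_extendable_at_def by blast
  have "(\<lambda>z. F1 z - F2 z) holomorphic_on ball z0 (min r1 r2)"
    using 1(2) 2(2) by (intro holomorphic_intros) (auto elim: holomorphic_on_subset)
  then show ?thesis
    unfolding holomorphic_extendable_at_def using 1 2
    by (intro exI[of _ "min r1 r2"] conjI exI[of _ "\<lambda>z. F1 z - F2 z"]) auto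
qed

lemma holomorphic_extendable_at_cmult:
  assumes "holomorphic_extendable_at \<Omega> z0 f"
  shows "holomorphic_extendable_at \<Omega> z0 (\<lambda>z. c * f z)"
proof -
  obtain r F where "r > 0" "F holomorphic_on ball z0 r" "\<forall>z\<in>\<Omega> \<inter> ball z0 r. F z = f z"
    using assms unfolding holomorphic_extendable_at_def by blast
  then show ?thesis
    unfolding holomorphic_extendable_at_def
    by (intro exI[of _ r] conjI exI[of _ "\<lambda>z. c * F z"]) (auto intro: holomorphic_intros)
qed

lemma not_holomorphic_extendable_at_pole:
  assumes "z0 \<in> closure \<Omega>" "z0 \<notin> \<Omega>"
  shows "\<not> holomorphic_extendable_at \<Omega> z0 (\<lambda>z. 1 / (z - z0))"
proof
  assume "holomorphic_extendable_at \<Omega> z0 (\<lambda>z. 1 / (z - z0))"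
  then obtain r F where r: "r > 0" and F: "F holomorphic_on ball z0 r"
    and F_eq: "\<And>z. z \<in> \<Omega> \<inter> ball z0 r \<Longrightarrow> F z = 1 / (z - z0)"
    unfolding holomorphic_extendable_at_def by blast
  have "isCont F z0"
    using holomorphic_on_imp_continuous_on[OF F] r by (simp add: continuous_on_eq_continuous_at)
  define L where "L = at z0 within \<Omega> \<inter> ball z0 r"
  have "z0 \<in> closure (\<Omega> \<inter> ball z0 r - {z0})"
    using assms r unfolding closure_approachable
    by (metis Diff_iff IntI dist_commute mem_ball min_less_iff_conj singletonD)
  then have "L \<noteq> bot"
    by (simp add: L_def at_within_eq_bot_iff)
  moreover have "(F \<longlongrightarrow> F z0) L"
    using \<open>isCont F z0\<close> unfolding L_def isCont_def by (rule tendsto_mono[OF at_le, rotated]) simp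
  moreover have "filterlim F at_infinity L"
  proof (rule filterlim_cong[THEN iffD1, OF refl refl])
    show "eventually (\<lambda>z. 1 / (z - z0) = F z) L"
      unfolding L_def eventually_at_filter by (auto simp: F_eq)
    show "filterlim (\<lambda>z. 1 / (z - z0)) at_infinity L"
      using is_pole_inverse[of z0] unfolding is_pole_def L_def
      by (rule filterlim_mono) (auto intro: at_le)
  qed
  ultimately show False
    by (rule not_tendsto_and_filterlim_at_infinity)
qed

definition bounded_extensions :: "complex set \<Rightarrow> complex \<Rightarrow> real \<Rightarrow> real \<Rightarrow> (complex \<Rightarrow> complex) set" where
  "bounded_extensions \<Omega> z0 r B = {f \<in> Hol \<Omega>. \<exists>F. F holomorphic_on ball z0 r \<and>
     (\<forall>z\<in>ball z0 r. cmod (F z) \<le> B) \<and> (\<forall>z\<in>\<Omega> \<inter> ball z0 r. F z = f z)}"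

lemma bounded_extensions_pointwise_limit:
  assumes "open \<Omega>" "connected (\<Omega> \<inter> ball z0 r)"
    and "open V" "V \<noteq> {}" "V \<subseteq> \<Omega> \<inter> ball z0 r"
    and "f \<in> Hol \<Omega>" "range g \<subseteq> bounded_extensions \<Omega> z0 r B"
    and lim: "\<And>z. z \<in> V \<Longrightarrow> (\<lambda>j. g j z) \<longlonglongrightarrow> f z"
  shows "f \<in> bounded_extensions \<Omega> z0 r B"
proof -
  have "\<forall>j. \<exists>F. F holomorphic_on ball z0 r \<and> (\<forall>z\<in>ball z0 r. cmod (F z) \<le> B) \<and>
                (\<forall>z\<in>\<Omega> \<inter> ball z0 r. F z = g j z)"
    using assms(7) unfolding bounded_extensions_def by blast
  then obtain F where F: "\<And>j. F j holomorphic_on ball z0 r"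
    "\<And>j z. z \<in> ball z0 r \<Longrightarrow> cmod (F j z) \<le> B"
    "\<And>j z. z \<in> \<Omega> \<inter> ball z0 r \<Longrightarrow> F j z = g j z"
    by metis
  define \<H> where "\<H> = {h. h holomorphic_on ball z0 r \<and> (\<forall>z\<in>ball z0 r. cmod (h z) \<le> B)}"
  obtain G \<sigma> where G: "G holomorphic_on ball z0 r" and "strict_mono \<sigma>"
    and G_lim: "\<And>z. z \<in> ball z0 r \<Longrightarrow> (\<lambda>n. F (\<sigma> n) z) \<longlonglongrightarrow> G z"
  proof (rule Montel[of "ball z0 r" \<H> F])
    show "\<exists>C. \<forall>h\<in>\<H>. \<forall>z\<in>K. cmod (h z) \<le> C" if "K \<subseteq> ball z0 r" for K
      using that by (intro exI[of _ B]) (auto simp: \<H>_def)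
  qed (use F in \<open>auto simp: \<H>_def\<close>)
  have G_bound: "cmod (G z) \<le> B" if "z \<in> ball z0 r" for z
    using that by (intro tendsto_upperbound[OF tendsto_norm[OF G_lim]]) (auto simp: F(2))
  have G_eq_V: "G z = f z" if "z \<in> V" for z
  proof (rule LIMSEQ_unique[OF G_lim])
    show "(\<lambda>n. F (\<sigma> n) z) \<longlonglongrightarrow> f z"
      using LIMSEQ_subseq_LIMSEQ[OF lim \<open>strict_mono \<sigma>\<close>] that assms(5)
      by (simp add: F(3) subset_iff o_def)
  qed (use that assms(5) in auto)
  have "f holomorphic_on \<Omega> \<inter> ball z0 r"
    using assms(6) holomorphic_on_subset unfolding Hol_def by blast
  then have "G z = f z" if "z \<in> \<Omega> \<inter> ball z0 r" for z
    using analytic_continuation_open[of V "\<Omega> \<inter> ball z0 r" G f z] assms G G_eq_V that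
      holomorphic_on_subset[OF G Int_lower2]
    by (simp add: open_Int)
  then show ?thesis
    unfolding bounded_extensions_def using assms(6) G G_bound by auto
qed

lemma closedin_bounded_extensions:
  assumes "open \<Omega>" "z0 \<in> closure \<Omega>" "r > 0" "connected (\<Omega> \<inter> ball z0 r)"
  shows "closedin (hol_topology \<Omega>) (bounded_extensions \<Omega> z0 r B)"
proof (rule closedin_hol_topologyI)
  show "bounded_extensions \<Omega> z0 r B \<subseteq> Hol \<Omega>"
    by (auto simp: bounded_extensions_def)
next
  fix f assume f: "f \<in> Hol \<Omega>"
    and approx: "\<And>K e. compact K \<Longrightarrow> K \<subseteq> \<Omega> \<Longrightarrow> e > 0 \<Longrightarrow>
                   \<exists>g\<in>bounded_extensions \<Omega> z0 r B. \<forall>z\<in>K. cmod (g z - f z) < e"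
  have "\<Omega> \<inter> ball z0 r \<noteq> {}"
    using assms(2,3) unfolding closure_approachable by (metis IntI dist_commute empty_iff mem_ball)
  then obtain p where "p \<in> \<Omega> \<inter> ball z0 r"
    by blast
  then obtain e where e: "e > 0" "cball p e \<subseteq> \<Omega> \<inter> ball z0 r"
    using open_contains_cball assms(1) by (metis open_Int open_ball)
  have "\<exists>g\<in>bounded_extensions \<Omega> z0 r B. \<forall>z\<in>cball p e. cmod (g z - f z) < inverse (real (Suc j))" for j
    using e by (intro approx) auto
  then obtain g where g: "\<And>j. g j \<in> bounded_extensions \<Omega> z0 r B"
    and g_close: "\<And>j z. z \<in> cball p e \<Longrightarrow> cmod (g j z - f z) < inverse (real (Suc j))"
    by metis
  have "(\<lambda>j. g j z) \<longlonglongrightarrow> f z" if "z \<in> ball p e" for z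
  proof -
    have "(\<lambda>j. g j z - f z) \<longlonglongrightarrow> 0"
      using that g_close
      by (intro Lim_null_comparison[OF always_eventually LIMSEQ_inverse_real_of_nat])
         (auto intro: less_imp_le)
    then show ?thesis
      by (simp add: LIM_zero_iff)
  qed
  then show "f \<in> bounded_extensions \<Omega> z0 r B"
    using e g by (intro bounded_extensions_pointwise_limit[of _ z0 r "ball p e"] f assms) auto
qed

lemma holomorphic_extendable_at_iff_bounded_extensions:
  assumes "\<delta> > 0" "f \<in> Hol \<Omega>"
  shows "holomorphic_extendable_at \<Omega> z0 f \<longleftrightarrow>
           (\<exists>n m::nat. f \<in> bounded_extensions \<Omega> z0 (\<delta> / real (Suc n)) (real m))"
proof
  assume "holomorphic_extendable_at \<Omega> z0 f"
  then obtain r F where r: "r > 0" and F: "F holomorphic_on ball z0 r"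
    and F_eq: "\<And>z. z \<in> \<Omega> \<inter> ball z0 r \<Longrightarrow> F z = f z"
    unfolding holomorphic_extendable_at_def by blast
  obtain n where "inverse (real (Suc n)) < r / \<delta>"
    using r assms(1) by (metis divide_pos_pos reals_Archimedean)
  then have n: "\<delta> / real (Suc n) < r"
    using assms(1) by (simp add: field_simps)
  define \<rho> where "\<rho> = \<delta> / real (Suc n)"
  have sub: "cball z0 \<rho> \<subseteq> ball z0 r"
    using n by (auto simp: \<rho>_def)
  have "compact (F ` cball z0 \<rho>)"
    using F sub by (intro compact_continuous_image holomorphic_on_imp_continuous_on)
      (auto elim: holomorphic_on_subset)
  then obtain B where B: "\<And>z. z \<in> cball z0 \<rho> \<Longrightarrow> cmod (F z) \<le> B"
    using compact_imp_bounded bounded_iff by (metis image_eqI)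
  have "f \<in> bounded_extensions \<Omega> z0 \<rho> (real (nat \<lceil>B\<rceil>))"
    unfolding bounded_extensions_def
  proof (intro CollectI conjI exI[of _ F] ballI assms(2))
    show "F holomorphic_on ball z0 \<rho>"
      using F sub ball_subset_cball holomorphic_on_subset by blast
    show "cmod (F z) \<le> real (nat \<lceil>B\<rceil>)" if "z \<in> ball z0 \<rho>" for z
      using B[of z] that by (simp add: order_trans[OF _ real_nat_ceiling_ge])
    show "F z = f z" if "z \<in> \<Omega> \<inter> ball z0 \<rho>" for z
      using F_eq that sub ball_subset_cball by blast
  qed
  then show "\<exists>n m::nat. f \<in> bounded_extensions \<Omega> z0 (\<delta> / real (Suc n)) (real m)"
    unfolding \<rho>_def by blast
next
  assume "\<exists>n m::nat. f \<in> bounded_extensions \<Omega> z0 (\<delta> / real (Suc n)) (real m)"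
  then obtain n F where "F holomorphic_on ball z0 (\<delta> / real (Suc n))"
    and "\<forall>z\<in>\<Omega> \<inter> ball z0 (\<delta> / real (Suc n)). F z = f z"
    unfolding bounded_extensions_def by blast
  moreover have "\<delta> / real (Suc n) > 0"
    using assms(1) by simp
  ultimately show "holomorphic_extendable_at \<Omega> z0 f"
    unfolding holomorphic_extendable_at_def by blast
qed

lemma U1_eq_Inter_bounded_extensions:
  assumes "\<delta> > 0"
  shows "U1 \<Omega> z0 =
           \<Inter> (range (\<lambda>(n, m). Hol \<Omega> - bounded_extensions \<Omega> z0 (\<delta> / real (Suc n)) (real m)))"
  using holomorphic_extendable_at_iff_bounded_extensions[OF assms]
  by (auto simp: U1_eq)

lemma U1_add_scaled:
  assumes "f \<in> Hol \<Omega>" "g \<in> U1 \<Omega> z0" "s \<noteq> t"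
  shows "(\<lambda>z. f z + s * g z) \<in> U1 \<Omega> z0 \<or> (\<lambda>z. f z + t * g z) \<in> U1 \<Omega> z0"
proof -
  have hol: "(\<lambda>z. f z + c * g z) \<in> Hol \<Omega>" for c
    using assms(1,2) by (auto simp: Hol_def U1_eq intro!: holomorphic_intros)
  have g_eq: "g = (\<lambda>z. inverse (s - t) * ((f z + s * g z) - (f z + t * g z)))"
  proof
    fix z
    have "(f z + s * g z) - (f z + t * g z) = (s - t) * g z"
      by (simp add: algebra_simps)
    then show "g z = inverse (s - t) * ((f z + s * g z) - (f z + t * g z))"
      using assms(3) by simp
  qed
  have "\<not> holomorphic_extendable_at \<Omega> z0 g"
    using assms(2) by (simp add: U1_eq)
  then show ?thesis
  proof (rule contrapos_np)
    assume "\<not> ?thesis"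
    then have "holomorphic_extendable_at \<Omega> z0 (\<lambda>z. f z + s * g z)"
      and "holomorphic_extendable_at \<Omega> z0 (\<lambda>z. f z + t * g z)"
      using hol by (auto simp: U1_eq)
    then show "holomorphic_extendable_at \<Omega> z0 g"
      by (subst g_eq) (intro holomorphic_extendable_at_cmult holomorphic_extendable_at_diff)
  qed
qed

lemma closure_of_U1_eq_topspace:
  assumes "U1 \<Omega> z0 \<noteq> {}"
  shows "hol_topology \<Omega> closure_of U1 \<Omega> z0 = topspace (hol_topology \<Omega>)"
proof (rule antisym[OF closure_of_subset_topspace subsetI])
  obtain g where g: "g \<in> U1 \<Omega> z0"
    using assms by blast
  fix f assume "f \<in> topspace (hol_topology \<Omega>)"
  then have f: "f \<in> Hol \<Omega>"
    by (simp add: topspace_hol_topology)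
  show "f \<in> hol_topology \<Omega> closure_of U1 \<Omega> z0"
  proof (rule in_closure_of_hol_topologyI[OF _ f])
    show "U1 \<Omega> z0 \<subseteq> Hol \<Omega>"
      by (auto simp: U1_eq)
    fix K e assume K: "compact K" "K \<subseteq> \<Omega>" and "e > (0::real)"
    have "g holomorphic_on \<Omega>"
      using g by (simp add: U1_eq Hol_def)
    then have "continuous_on K g"
      using K(2) by (meson holomorphic_on_imp_continuous_on continuous_on_subset)
    then have "compact (g ` K)"
      using K(1) by (rule compact_continuous_image)
    then obtain B where "B > 0" and "\<forall>w\<in>g ` K. cmod w \<le> B"
      by (meson compact_imp_bounded bounded_pos)
    then have B: "\<And>z. z \<in> K \<Longrightarrow> cmod (g z) \<le> B"
      by blast
    define t where "t = e / (2 * B)"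
    have "t > 0" "t * B < e"
      using \<open>B > 0\<close> \<open>e > 0\<close> by (simp_all add: t_def)
    have close: "cmod ((f z + of_real c * g z) - f z) < e" if "z \<in> K" "0 < c" "c \<le> t" for z c
    proof -
      have "cmod ((f z + of_real c * g z) - f z) = c * cmod (g z)"
        using that(2) by (simp add: norm_mult)
      also have "\<dots> \<le> t * B"
        using that B[of z] \<open>B > 0\<close> by (intro mult_mono) auto
      finally show ?thesis
        using \<open>t * B < e\<close> by simp
    qed
    have "complex_of_real (t / 2) \<noteq> of_real t"
      using \<open>t > 0\<close> by simp
    from U1_add_scaled[OF f g this] obtain c where "c \<in> {t / 2, t}"
      and "(\<lambda>z. f z + of_real c * g z) \<in> U1 \<Omega> z0"
      by blast
    moreover have "0 < c" "c \<le> t"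
      using calculation(1) \<open>t > 0\<close> by auto
    ultimately show "\<exists>h\<in>U1 \<Omega> z0. \<forall>z\<in>K. cmod (h z - f z) < e"
      using close by (intro bexI[of _ "\<lambda>z. f z + of_real c * g z"]) auto
  qed
qed

lemma pole_in_U1:
  assumes "open \<Omega>" "z0 \<in> frontier \<Omega>"
  shows "(\<lambda>z. 1 / (z - z0)) \<in> U1 \<Omega> z0"
proof -
  have "z0 \<in> closure \<Omega>" "z0 \<notin> \<Omega>"
    using assms by (simp_all add: frontier_def interior_open)
  moreover have "(\<lambda>z. 1 / (z - z0)) holomorphic_on \<Omega>"
    using \<open>z0 \<notin> \<Omega>\<close> by (intro holomorphic_intros) auto
  ultimately show ?thesis
    using not_holomorphic_extendable_at_pole by (simp add: U1_eq Hol_def)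
qed

theorem theorem3p5:
  fixes \<Omega> :: "complex set" and z0 :: complex and \<delta> :: real
  assumes "open \<Omega>" and "connected \<Omega>" and "\<Omega> \<noteq> {}" and "\<Omega> \<noteq> UNIV"
    and "z0 \<in> frontier \<Omega>"
    and "\<delta> > 0"
    and "\<And>r. 0 < r \<Longrightarrow> r \<le> \<delta> \<Longrightarrow> connected (ball z0 r \<inter> \<Omega>)"
  shows "gdelta_in (hol_topology \<Omega>) (U1 \<Omega> z0) \<and>
         (hol_topology \<Omega>) closure_of (U1 \<Omega> z0) = topspace (hol_topology \<Omega>)"
proof
  have "closedin (hol_topology \<Omega>) (bounded_extensions \<Omega> z0 (\<delta> / real (Suc n)) B)" for n B
  proof (rule closedin_bounded_extensions)
    show "connected (\<Omega> \<inter> ball z0 (\<delta> / real (Suc n)))"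
      using assms(6,7) by (simp add: Int_commute field_simps)
  qed (use assms(1,5,6) frontier_def in auto)
  then have "openin (hol_topology \<Omega>) (Hol \<Omega> - bounded_extensions \<Omega> z0 (\<delta> / real (Suc n)) B)" for n B
    by (metis closedin_def topspace_hol_topology)
  then show "gdelta_in (hol_topology \<Omega>) (U1 \<Omega> z0)"
    unfolding U1_eq_Inter_bounded_extensions[OF assms(6)]
    by (intro gdelta_in_Inter) (auto intro: open_imp_gdelta_in)
  show "hol_topology \<Omega> closure_of U1 \<Omega> z0 = topspace (hol_topology \<Omega>)"
    using closure_of_U1_eq_topspace pole_in_U1[OF assms(1,5)] by blast
qed

end
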